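(* Let $\Sigma$ be a graded alphabet, $t\in T_\Sigma$, and $A_t=(\Sigma,Q,\nu,\delta)$ the subtree automaton of $t$. Then for every state $r\in Q$, the down language satisfies $L_r(A_t)=\{\mathrm{h}(r)\}$.
   Context: A graded alphabet is a finite set $\Sigma=\bigcup_{k\in\mathbb{N}}\Sigma_k$; $T_\Sigma$ is the set of trees $f(t_1,\ldots,t_k)$ with $f\in\Sigma_k$. A RWTA is $A=(\Sigma,Q,\nu,\delta)$ with $Q$ finite, $\nu:Q\to\mathbb{N}$, $\delta\subseteq\bigcup_k Q\times\Sigma_k\times Q^k$; $\delta(f,q_1,\ldots,q_k)=\{q\mid(q,f,q_1,\ldots,q_k)\in\delta\}$, extended to subsets by union over tuples; $\Delta(f(t_1,\ldots,t_k))=\delta(f,\Delta(t_1),\ldots,\Delta(t_k))$. The down language of a state $q$ is $L_q(A)=\{s\in T_\Sigma\mid q\in\Delta(s)\}$. For $t=f(t_1,\ldots,t_k)$, $\mathrm{SubTree}(t)=\{t\}\cup\bigcup_j\mathrm{SubTree}(t_j)$. The tree $t^\sharp$ is obtained from $t$ by indexing each symbol occurrence with its position in a preorder traversal (indexed symbols are distinct and keep their arity); $\Sigma_{t^\sharp}$ is the set of indexed symbols of $t^\sharp$; $\mathrm{h}$ erases indices. The subtree automaton of $t$ is $A_t=(\Sigma,Q,\nu,\delta)$ with $Q=\mathrm{SubTree}(t^\sharp)$, $\nu\equiv1$, and for $f\in\Sigma_{t^\sharp}$ of arity $k$ and $t_1,\ldots,t_{k+1}\in Q$: $t_{k+1}\in\delta(\mathrm{h}(f),t_1,\ldots,t_k)$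 iff $t_{k+1}=f(t_1,\ldots,t_k)$. *)

theory Defs
  imports Main
begin

datatype 'f tree = Node 'f "'f tree list"

fun wf_tree :: "'f set \<Rightarrow> ('f \<Rightarrow> nat) \<Rightarrow> 'f tree \<Rightarrow> bool" where
  "wf_tree Sig ar (Node f ts) \<longleftrightarrow>
     f \<in> Sig \<and> length ts = ar f \<and> (\<forall>t\<in>set ts. wf_tree Sig ar t)"

fun subtrees :: "'f tree \<Rightarrow> 'f tree set" where
  "subtrees (Node f ts) = insert (Node f ts) (\<Union> (set (map subtrees ts)))"

fun symbols :: "'f tree \<Rightarrow> 'f set" where
  "symbols (Node f ts) = insert f (\<Union> (set (map symbols ts)))"

fun idx :: "nat \<Rightarrow> 'f tree \<Rightarrow> ('f \<times> nat) tree \<times> nat"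
and idxs :: "nat \<Rightarrow> 'f tree list \<Rightarrow> ('f \<times> nat) tree list \<times> nat" where
  "idx n (Node f ts) = (let (ts', m) = idxs (Suc n) ts in (Node (f, n) ts', m))"
| "idxs n [] = ([], n)"
| "idxs n (t # ts) = (let (t', m) = idx n t; (ts', k) = idxs m ts in (t' # ts', k))"

definition sharp :: "'f tree \<Rightarrow> ('f \<times> nat) tree" where
  "sharp t = fst (idx 0 t)"

definition h :: "('f \<times> nat) tree \<Rightarrow> 'f tree" where
  "h t = map_tree fst t"

text \<open>RWTA (Sigma, Q, nu, delta): the alphabet is fixed externally; a transition
(q, f, [q1,...,qk]) means q \<in> delta(f, q1, ..., qk).\<close>
record ('q, 'f) rwta =
  states :: "'q set"
  weight :: "'q \<Rightarrow> nat"
  trans :: "('q \<times> 'f \<times> 'q list) set"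

fun Delta :: "('q \<times> 'f \<times> 'q list) set \<Rightarrow> 'f tree \<Rightarrow> 'q set" where
  "Delta \<delta> (Node f ts) =
     {q. \<exists>qs. (q, f, qs) \<in> \<delta> \<and> list_all2 (\<in>) qs (map (Delta \<delta>) ts)}"

definition down_lang :: "'f set \<Rightarrow> ('f \<Rightarrow> nat) \<Rightarrow> ('q, 'f) rwta \<Rightarrow> 'q \<Rightarrow> 'f tree set" where
  "down_lang Sig ar A q = {s. wf_tree Sig ar s \<and> q \<in> Delta (trans A) s}"

definition subtree_automaton :: "('f \<Rightarrow> nat) \<Rightarrow> 'f tree \<Rightarrow> (('f \<times> nat) tree, 'f) rwta" where
  "subtree_automaton ar t =
     (let Q = subtrees (sharp t) in
      \<lparr> states = Q,
        weight = (\<lambda>_. 1),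
        trans = {(q, fst f, qs) | q f qs.
                   f \<in> symbols (sharp t) \<and> length qs = ar (fst f) \<and> set qs \<subseteq> Q \<and>
                   q \<in> Q \<and> q = Node f qs} \<rparr>)"

end

theory Submission
  imports Defs
begin

text \<open>A transition of the subtree automaton of t reads an indexed node of t^sharp from the
states of its children, so a run into state r can only read the tree h r; conversely every
node of r is a subtree of t^sharp and thus yields a transition, giving a run on h r.\<close>

lemma h_Node [simp]: "h (Node f ts) = Node (fst f) (map h ts)"
  by (simp add: h_def)

lemma map_tree_fst_idx:
  fixes t :: "'f tree" and ts :: "'f tree list"
  shows "map_tree fst (fst (idx n t)) = t"
    and "map (map_tree fst) (fst (idxs n ts)) = ts"
proof (induction n t and n ts rule: idx_idxs.induct)
  case (3 n t ts)
  then show ?case by (simp add: case_prod_beta) (metis prod.collapse)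
qed (simp_all add: case_prod_beta)

lemma h_sharp [simp]: "h (sharp t) = t"
  by (simp add: h_def sharp_def map_tree_fst_idx)

lemma subtrees_refl: "u \<in> subtrees u"
  by (cases u) simp

lemma subtrees_trans: "r \<in> subtrees u \<Longrightarrow> subtrees r \<subseteq> subtrees u"
  by (induction u) fastforce

lemma symbols_subtree: "r \<in> subtrees u \<Longrightarrow> symbols r \<subseteq> symbols u"
  by (induction u) fastforce

lemma h_subtree: "r \<in> subtrees u \<Longrightarrow> h r \<in> subtrees (h u)"
  by (induction u) fastforce

lemma wf_tree_subtree: "r \<in> subtrees u \<Longrightarrow> wf_tree Sig ar u \<Longrightarrow> wf_tree Sig ar r"
  by (induction u) fastforce

lemma Delta_determines_tree:
  assumes node: "\<And>q g qs. (q, g, qs) \<in> \<delta> \<Longrightarrow> \<exists>i. q = Node (g, i) qs"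
  shows "r \<in> Delta \<delta> s \<Longrightarrow> s = h r"
proof (induction s arbitrary: r)
  case (Node g ss)
  then obtain qs where r_qs: "(r, g, qs) \<in> \<delta>"
    and runs: "list_all2 (\<in>) qs (map (Delta \<delta>) ss)" by auto
  from node[OF r_qs] obtain i where r: "r = Node (g, i) qs" by blast
  have "ss = map h qs"
    using runs Node.IH by (auto simp: list_all2_conv_all_nth intro!: nth_equalityI)
  then show ?case by (simp add: r)
qed

lemma in_Delta_h:
  assumes "\<And>f qs. Node f qs \<in> subtrees r \<Longrightarrow> (Node f qs, fst f, qs) \<in> \<delta>"
  shows "r \<in> Delta \<delta> (h r)"
  using assms
proof (induction r)
  case (Node f qs)
  have "q \<in> Delta \<delta> (h q)" if "q \<in> set qs" for q
    using Node.IH[OF that] Node.prems that subtrees_trans by fastforce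
  then have "list_all2 (\<in>) qs (map (Delta \<delta>) (map h qs))"
    by (auto simp: list_all2_conv_all_nth)
  moreover have "(Node f qs, fst f, qs) \<in> \<delta>"
    using Node.prems subtrees_refl by blast
  ultimately show ?case by auto
qed

lemma trans_subtree_automaton:
  "(q, g, qs) \<in> trans (subtree_automaton ar t) \<longleftrightarrow>
     (\<exists>i. q = Node (g, i) qs \<and> (g, i) \<in> symbols (sharp t) \<and> length qs = ar g \<and>
          set qs \<subseteq> subtrees (sharp t) \<and> q \<in> subtrees (sharp t))"
  by (auto simp: subtree_automaton_def Let_def)

lemma Node_in_trans_subtree_automaton:
  "(Node f qs, fst f, qs) \<in> trans (subtree_automaton ar t) \<longleftrightarrow>
     f \<in> symbols (sharp t) \<and> length qs = ar (fst f) \<and>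
     set qs \<subseteq> subtrees (sharp t) \<and> Node f qs \<in> subtrees (sharp t)"
  unfolding trans_subtree_automaton by (cases f) auto

theorem corollary3:
  fixes Sig :: "'f set" and ar :: "'f \<Rightarrow> nat" and t :: "'f tree"
  assumes "finite Sig"
    and "wf_tree Sig ar t"
    and "r \<in> states (subtree_automaton ar t)"
  shows "down_lang Sig ar (subtree_automaton ar t) r = {h r}"
proof -
  have r_sub: "r \<in> subtrees (sharp t)"
    using assms(3) by (simp add: subtree_automaton_def Let_def)
  have wf_h: "wf_tree Sig ar (h q)" if "q \<in> subtrees (sharp t)" for q
    using wf_tree_subtree[OF h_subtree[OF that]] assms(2) by simp
  have "s = h r" if "r \<in> Delta (trans (subtree_automaton ar t)) s" for s
    by (rule Delta_determines_tree[OF _ that]) (auto simp: trans_subtree_automaton)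
  moreover have "r \<in> Delta (trans (subtree_automaton ar t)) (h r)"
  proof (rule in_Delta_h)
    fix f qs assume "Node f qs \<in> subtrees r"
    then have q: "Node f qs \<in> subtrees (sharp t)"
      using r_sub subtrees_trans by blast
    have "set qs \<subseteq> subtrees (sharp t)"
      using subtrees_trans[OF q] subtrees_refl by fastforce
    then show "(Node f qs, fst f, qs) \<in> trans (subtree_automaton ar t)"
      using q wf_h[OF q] symbols_subtree[OF q] by (simp add: Node_in_trans_subtree_automaton)
  qed
  ultimately show ?thesis
    using wf_h[OF r_sub] unfolding down_lang_def by blast
qed

end
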